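(* Let $q<2$ with $q\neq 1$, let $r\in\mathbb{R}$, and let $a_1,\dots,a_n>0$, $b_1,\dots,b_n>0$. Then $$\left(\sum_{i=1}^n b_i^r\right)^{1-q}\sum_{i=1}^n a_i^r \ln_q\!\left(\frac{a_i^r}{b_i^r}\right)\ \geq\ \left(\sum_{i=1}^n a_i^r\right)\left\{\ln_q\!\left(\sum_{i=1}^n a_i^r\right)-\ln_q\!\left(\sum_{i=1}^n b_i^r\right)\right\}.$$
   Context: For $q\neq 1$ and $x>0$, the $q$-deformed logarithm is $\ln_q(x)=\dfrac{x^{1-q}-1}{1-q}$. *)

theory Defs
  imports Complex_Main
begin

definition ln_q :: "real \<Rightarrow> real \<Rightarrow> real" where
  "ln_q q x = (x powr (1 - q) - 1) / (1 - q)"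

end

theory Submission
  imports Defs "HOL-Analysis.Convex"
begin

text \<open>With p = 1 - q, the identity
  x ln_q(x/y) = (y (x/y)^(1+p) - x) / p turns both sides into expressions in
  A = sum x, B = sum y and T = sum y (x/y)^(1+p), and the claim becomes
  (B^p T - A^(1+p)) / p \<ge> 0. This is Jensen's inequality for the perspective of
  t \<mapsto> t^(1+p), which is convex for p > 0 and concave for -1 < p < 0.\<close>

lemma powr_concave:
  assumes "0 \<le> p" "p \<le> 1"
  shows "concave_on {0<..} (\<lambda>x::real. x powr p)"
proof (rule f''_le0_imp_concave)
  fix x :: real assume "x \<in> {0<..}"
  then show "((\<lambda>x. x powr p) has_real_derivative p * x powr (p - 1)) (at x)"
    and "((\<lambda>x. p * x powr (p - 1)) has_real_derivative p * ((p - 1) * x powr (p - 1 - 1))) (at x)"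
    by (auto intro!: derivative_eq_intros)
  show "p * ((p - 1) * x powr (p - 1 - 1)) \<le> 0"
    using assms by (intro mult_nonneg_nonpos mult_nonpos_nonneg) auto
qed auto

lemma convex_on_perspective_sum:
  fixes f :: "real \<Rightarrow> real" and x y :: "'a \<Rightarrow> real"
  assumes f: "convex_on {0<..} f" and S: "finite S" "S \<noteq> {}"
    and x: "\<And>i. i \<in> S \<Longrightarrow> x i > 0" and y: "\<And>i. i \<in> S \<Longrightarrow> y i > 0"
  shows "(\<Sum>i\<in>S. y i) * f ((\<Sum>i\<in>S. x i) / (\<Sum>i\<in>S. y i)) \<le> (\<Sum>i\<in>S. y i * f (x i / y i))"
proof -
  define B where "B = (\<Sum>i\<in>S. y i)"
  have B: "B > 0"
    unfolding B_def using S y by (simp add: sum_pos)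
  have "f (\<Sum>i\<in>S. (y i / B) *\<^sub>R (x i / y i)) \<le> (\<Sum>i\<in>S. y i / B * f (x i / y i))"
  proof (rule convex_on_sum[OF S f])
    show "(\<Sum>i\<in>S. y i / B) = 1"
      using B by (simp add: B_def flip: sum_divide_distrib)
  qed (use B x y in \<open>auto intro: less_imp_le\<close>)
  moreover have "(\<Sum>i\<in>S. (y i / B) *\<^sub>R (x i / y i)) = (\<Sum>i\<in>S. x i) / B"
    unfolding sum_divide_distrib by (rule sum.cong) (simp_all add: y[THEN less_imp_neq, symmetric])
  ultimately show ?thesis
    using B by (simp add: B_def sum_divide_distrib[symmetric] field_simps)
qed

lemma concave_on_perspective_sum:
  fixes f :: "real \<Rightarrow> real" and x y :: "'a \<Rightarrow> real"
  assumes f: "concave_on {0<..} f" and S: "finite S" "S \<noteq> {}"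
    and x: "\<And>i. i \<in> S \<Longrightarrow> x i > 0" and y: "\<And>i. i \<in> S \<Longrightarrow> y i > 0"
  shows "(\<Sum>i\<in>S. y i) * f ((\<Sum>i\<in>S. x i) / (\<Sum>i\<in>S. y i)) \<ge> (\<Sum>i\<in>S. y i * f (x i / y i))"
  using convex_on_perspective_sum[of "\<lambda>t. - f t", OF _ S x y] f
  by (simp add: concave_on_def sum_negf)

lemma powr_sum_le_perspective:
  fixes x y :: "'a \<Rightarrow> real"
  assumes s: "s \<ge> 1" and S: "finite S" "S \<noteq> {}"
    and x: "\<And>i. i \<in> S \<Longrightarrow> x i > 0" and y: "\<And>i. i \<in> S \<Longrightarrow> y i > 0"
  shows "(\<Sum>i\<in>S. x i) powr s \<le> (\<Sum>i\<in>S. y i) powr (s - 1) * (\<Sum>i\<in>S. y i * (x i / y i) powr s)"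
proof -
  define A B where "A = (\<Sum>i\<in>S. x i)" and "B = (\<Sum>i\<in>S. y i)"
  have "A > 0" "B > 0"
    unfolding A_def B_def using S x y by (simp_all add: sum_pos)
  then have "B * (A / B) powr s = A powr s / B powr (s - 1)"
    by (simp add: powr_divide powr_diff)
  moreover have "B * (A / B) powr s \<le> (\<Sum>i\<in>S. y i * (x i / y i) powr s)"
    unfolding A_def B_def using convex_on_perspective_sum[OF powr_convex[OF s] S x y] .
  ultimately show ?thesis
    using \<open>B > 0\<close> by (simp add: A_def B_def divide_le_eq mult.commute)
qed

lemma powr_sum_ge_perspective:
  fixes x y :: "'a \<Rightarrow> real"
  assumes s: "0 \<le> s" "s \<le> 1" and S: "finite S" "S \<noteq> {}"
    and x: "\<And>i. i \<in> S \<Longrightarrow> x i > 0" and y: "\<And>i. i \<in> S \<Longrightarrow> y i > 0"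
  shows "(\<Sum>i\<in>S. x i) powr s \<ge> (\<Sum>i\<in>S. y i) powr (s - 1) * (\<Sum>i\<in>S. y i * (x i / y i) powr s)"
proof -
  define A B where "A = (\<Sum>i\<in>S. x i)" and "B = (\<Sum>i\<in>S. y i)"
  have "A > 0" "B > 0"
    unfolding A_def B_def using S x y by (simp_all add: sum_pos)
  then have "B * (A / B) powr s = A powr s / B powr (s - 1)"
    by (simp add: powr_divide powr_diff)
  moreover have "B * (A / B) powr s \<ge> (\<Sum>i\<in>S. y i * (x i / y i) powr s)"
    unfolding A_def B_def using concave_on_perspective_sum[OF powr_concave[OF s] S x y] .
  ultimately show ?thesis
    using \<open>B > 0\<close> by (simp add: A_def B_def le_divide_eq mult.commute)
qed

lemma mult_ln_q_ratio:
  assumes "x > 0" "y > 0" "q \<noteq> 1"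
  shows "x * ln_q q (x / y) = (y * (x / y) powr (2 - q) - x) / (1 - q)"
proof -
  have "(x / y) powr (2 - q) = (x / y) * (x / y) powr (1 - q)"
    using powr_mult_base[of "x / y" "1 - q"] assms by simp
  then show ?thesis
    using assms by (simp add: ln_q_def field_simps)
qed

lemma mult_ln_q_diff:
  assumes "a > 0" "q \<noteq> 1"
  shows "a * (ln_q q a - ln_q q b) = (a powr (2 - q) - a * b powr (1 - q)) / (1 - q)"
proof -
  have "a powr (2 - q) = a * a powr (1 - q)"
    using powr_mult_base[of a "1 - q"] assms by simp
  then show ?thesis
    by (simp add: ln_q_def diff_divide_distrib right_diff_distrib)
qed

lemma ln_q_log_sum_inequality:
  fixes x y :: "'a \<Rightarrow> real"
  assumes q: "q < 2" "q \<noteq> 1" and S: "finite S"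
    and x: "\<And>i. i \<in> S \<Longrightarrow> x i > 0" and y: "\<And>i. i \<in> S \<Longrightarrow> y i > 0"
  shows "(\<Sum>i\<in>S. y i) powr (1 - q) * (\<Sum>i\<in>S. x i * ln_q q (x i / y i))
         \<ge> (\<Sum>i\<in>S. x i) * (ln_q q (\<Sum>i\<in>S. x i) - ln_q q (\<Sum>i\<in>S. y i))"
proof (cases "S = {}")
  case False
  define A B T where "A = (\<Sum>i\<in>S. x i)" and "B = (\<Sum>i\<in>S. y i)"
    and "T = (\<Sum>i\<in>S. y i * (x i / y i) powr (2 - q))"
  have "A > 0"
    unfolding A_def using S \<open>S \<noteq> {}\<close> x by (simp add: sum_pos)
  have lhs: "(\<Sum>i\<in>S. x i * ln_q q (x i / y i)) = (T - A) / (1 - q)"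
    unfolding T_def A_def sum_divide_distrib sum_subtractf[symmetric]
    by (rule sum.cong) (simp_all add: mult_ln_q_ratio x y q diff_divide_distrib)
  have rhs: "A * (ln_q q A - ln_q q B) = (A powr (2 - q) - A * B powr (1 - q)) / (1 - q)"
    using mult_ln_q_diff[OF \<open>A > 0\<close> q(2)] .
  have "0 \<le> (B powr (1 - q) * T - A powr (2 - q)) / (1 - q)"
  proof (cases "q < 1")
    case True
    then have "A powr (2 - q) \<le> B powr (1 - q) * T"
      using powr_sum_le_perspective[of "2 - q" S x y] S \<open>S \<noteq> {}\<close> x y
      by (simp add: A_def B_def T_def)
    with True show ?thesis by simp
  next
    case False
    with q have "A powr (2 - q) \<ge> B powr (1 - q) * T"
      using powr_sum_ge_perspective[of "2 - q" S x y] S \<open>S \<noteq> {}\<close> x y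
      by (simp add: A_def B_def T_def)
    with False q(2) show ?thesis by (simp add: divide_nonpos_neg)
  qed
  moreover have "B powr (1 - q) * ((T - A) / (1 - q)) - A * (ln_q q A - ln_q q B)
      = (B powr (1 - q) * T - A powr (2 - q)) / (1 - q)"
    unfolding rhs by (simp add: diff_divide_distrib algebra_simps)
  ultimately have "B powr (1 - q) * ((T - A) / (1 - q)) \<ge> A * (ln_q q A - ln_q q B)"
    by linarith
  then show ?thesis
    unfolding lhs A_def B_def .
qed simp

theorem mainTheorem3:
  fixes q r :: real and n :: nat and a b :: "nat \<Rightarrow> real"
  assumes "q < 2" and "q \<noteq> 1"
    and "\<And>i. i \<in> {1..n} \<Longrightarrow> a i > 0"
    and "\<And>i. i \<in> {1..n} \<Longrightarrow> b i > 0"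
  shows "(\<Sum>i=1..n. b i powr r) powr (1 - q) *
           (\<Sum>i=1..n. a i powr r * ln_q q (a i powr r / b i powr r))
         \<ge> (\<Sum>i=1..n. a i powr r) *
           (ln_q q (\<Sum>i=1..n. a i powr r) - ln_q q (\<Sum>i=1..n. b i powr r))"
  by (rule ln_q_log_sum_inequality) (use assms in force)+

end
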